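(* Let $\Omega$ be a measurable space with reference measure $\mathrm{d}\mathbf{y}$, let $\Theta$ be a parameter set, and for each $\bm{\theta}\in\Theta$ let $f_{\bm{\theta}}(\cdot\mid\cdot):\Omega\times\Omega\to\mathbb{R}$ be such that $0<\int_\Omega\exp\{f_{\bm{\theta}}(\mathbf{y}\mid\mathbf{u})\}\,\mathrm{d}\mathbf{y}<\infty$ for all $\mathbf{u}\in\Omega$. Given a fixed initial point $\mathbf{y}_0\in\Omega$ and observations $\mathbf{y}_1,\ldots,\mathbf{y}_n\in\Omega$, define $$\mathcal{L}(\bm{\theta})=\sum_{t=1}^n\left[f_{\bm{\theta}}(\mathbf{y}_t\mid\mathbf{y}_{t-1})-\log\int_\Omega\exp\{f_{\bm{\theta}}(\mathbf{y}\mid\mathbf{y}_{t-1})\}\,\mathrm{d}\mathbf{y}\right]$$ and, for $\bm{\theta}\in\Theta$ and $\bm{\nu}=(\nu_0,\ldots,\nu_{n-1})\in\mathbb{R}^n$, $$\mathcal{M}(\bm{\theta},\bm{\nu})=\sum_{t=1}^n\{f_{\bm{\theta}}(\mathbf{y}_t\mid\mathbf{y}_{t-1})+\nu_{t-1}\}-\int_\Omega\left[\sum_{t=1}^n\exp\{f_{\bm{\theta}}(\mathbf{y}\mid\mathbf{y}_{t-1})+\nu_{t-1}\}\right]\mathrm{d}\mathbf{y}.$$ Then the set of points $\bm{\theta}^\star\in\operatorname{argmax}_{\bm{\theta}\in\Theta}\mathcal{L}(\bm{\theta})$ coincides with the set of points $\tilde{\bm{\theta}}$ such that $(\tilde{\bm{\theta}},\bm{\nu}^\star)\in\operatorname{argmax}_{\bm{\theta}\in\Theta,\bm{\nu}\in\mathbb{R}^n}\mathcal{M}(\bm{\theta},\bm{\nu})$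 for some $\bm{\nu}^\star\in\mathbb{R}^n$.
   Context: $\mathcal{L}$ is the log-likelihood of a Markov chain with unnormalised transition density $p_{\bm{\theta}}(\mathbf{y}_t\mid\mathbf{y}_{t-1})\propto\exp\{f_{\bm{\theta}}(\mathbf{y}_t\mid\mathbf{y}_{t-1})\}$, the initial point $\mathbf{y}_0$ being treated as a constant. *)

theory Defs
  imports "HOL-Analysis.Analysis"
begin

text \<open>f th y u stands for f_theta(y | u). Observations y 1..n, initial point y 0.\<close>

definition loglik :: "'a measure \<Rightarrow> ('p \<Rightarrow> 'a \<Rightarrow> 'a \<Rightarrow> real) \<Rightarrow> (nat \<Rightarrow> 'a) \<Rightarrow> nat \<Rightarrow> 'p \<Rightarrow> real" where
  "loglik M f y n th = (\<Sum>t=1..n. f th (y t) (y (t-1)) - ln (\<integral>x. exp (f th x (y (t-1))) \<partial>M))"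

definition Mobj :: "'a measure \<Rightarrow> ('p \<Rightarrow> 'a \<Rightarrow> 'a \<Rightarrow> real) \<Rightarrow> (nat \<Rightarrow> 'a) \<Rightarrow> nat \<Rightarrow> 'p \<Rightarrow> (nat \<Rightarrow> real) \<Rightarrow> real" where
  "Mobj M f y n th \<nu> = (\<Sum>t=1..n. f th (y t) (y (t-1)) + \<nu> (t-1))
      - (\<integral>x. (\<Sum>t=1..n. exp (f th x (y (t-1)) + \<nu> (t-1))) \<partial>M)"

end

theory Submission
  imports Defs
begin

text \<open>For \<open>Z > 0\<close> the concave function \<open>v \<mapsto> v - e\<^sup>v Z\<close> attains its maximum \<open>-ln Z - 1\<close> at
  \<open>v = -ln Z\<close>. Hence the inner integral of \<open>Mobj\<close> splits into one such term per time step,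
  maximising \<open>Mobj\<close> over \<open>\<nu>\<close> gives exactly \<open>loglik - n\<close>, and joint maximisation of \<open>Mobj\<close>
  is maximisation of the profile \<open>loglik\<close>.\<close>

lemma argmax_eq_argmax_profile:
  fixes F :: "'p \<Rightarrow> 'q \<Rightarrow> real" and G :: "'p \<Rightarrow> real"
  assumes le: "\<And>th \<nu>. th \<in> \<Theta> \<Longrightarrow> F th \<nu> \<le> G th - c"
    and attained: "\<And>th. th \<in> \<Theta> \<Longrightarrow> \<exists>\<nu>. F th \<nu> = G th - c"
  shows "{th \<in> \<Theta>. \<forall>th' \<in> \<Theta>. G th' \<le> G th}
       = {th \<in> \<Theta>. \<exists>\<nu>. \<forall>th' \<in> \<Theta>. \<forall>\<nu>'. F th' \<nu>' \<le> F th \<nu>}"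
proof (intro set_eqI iffI)
  fix th assume "th \<in> {th \<in> \<Theta>. \<forall>th' \<in> \<Theta>. G th' \<le> G th}"
  then have th: "th \<in> \<Theta>" and max: "\<And>th'. th' \<in> \<Theta> \<Longrightarrow> G th' \<le> G th" by auto
  obtain \<nu> where "F th \<nu> = G th - c" using attained[OF th] by blast
  then have "\<forall>th' \<in> \<Theta>. \<forall>\<nu>'. F th' \<nu>' \<le> F th \<nu>"
    using le max by (metis diff_right_mono order_trans)
  with th show "th \<in> {th \<in> \<Theta>. \<exists>\<nu>. \<forall>th' \<in> \<Theta>. \<forall>\<nu>'. F th' \<nu>' \<le> F th \<nu>}" by blast
next
  fix th assume "th \<in> {th \<in> \<Theta>. \<exists>\<nu>. \<forall>th' \<in> \<Theta>. \<forall>\<nu>'. F th' \<nu>' \<le> F th \<nu>}"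
  then obtain \<nu> where th: "th \<in> \<Theta>" and max: "\<And>th' \<nu>'. th' \<in> \<Theta> \<Longrightarrow> F th' \<nu>' \<le> F th \<nu>"
    by auto
  have "G th' \<le> G th" if th': "th' \<in> \<Theta>" for th'
  proof -
    obtain \<nu>' where "G th' - c = F th' \<nu>'" using attained[OF th'] by metis
    also have "\<dots> \<le> F th \<nu>" using max[OF th'] .
    also have "\<dots> \<le> G th - c" using le[OF th] .
    finally show ?thesis by simp
  qed
  with th show "th \<in> {th \<in> \<Theta>. \<forall>th' \<in> \<Theta>. G th' \<le> G th}" by blast
qed

lemma sub_exp_mult_le:
  fixes v Z :: real assumes "Z > 0"
  shows "v - exp v * Z \<le> - ln Z - 1"
proof -
  have "exp v * Z = exp (v + ln Z)" using assms by (simp add: exp_add)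
  moreover have "1 + (v + ln Z) \<le> exp (v + ln Z)" by (rule exp_ge_add_one_self)
  ultimately show ?thesis by linarith
qed

lemma sub_exp_mult_neg_ln:
  fixes Z :: real assumes "Z > 0"
  shows "- ln Z - exp (- ln Z) * Z = - ln Z - 1"
  using assms by (simp add: exp_minus)

definition norm_const :: "'a measure \<Rightarrow> ('p \<Rightarrow> 'a \<Rightarrow> 'a \<Rightarrow> real) \<Rightarrow> 'p \<Rightarrow> 'a \<Rightarrow> real" where
  "norm_const M f th u = (\<integral>x. exp (f th x u) \<partial>M)"

lemma loglik_eq_sum_norm_const:
  "loglik M f y n th = (\<Sum>t=1..n. f th (y t) (y (t-1)) - ln (norm_const M f th (y (t-1))))"
  by (simp add: loglik_def norm_const_def)

context
  fixes M :: "'a measure" and f :: "'p \<Rightarrow> 'a \<Rightarrow> 'a \<Rightarrow> real" and y :: "nat \<Rightarrow> 'a"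
    and n :: nat and th :: 'p
  assumes integ: "\<And>t. t \<in> {1..n} \<Longrightarrow> integrable M (\<lambda>x. exp (f th x (y (t-1))))"
begin

lemma Mobj_eq_sum_norm_const:
  "Mobj M f y n th \<nu> = (\<Sum>t=1..n. f th (y t) (y (t-1)) + \<nu> (t-1)
                                   - exp (\<nu> (t-1)) * norm_const M f th (y (t-1)))"
proof -
  have "(\<integral>x. (\<Sum>t=1..n. exp (f th x (y (t-1)) + \<nu> (t-1))) \<partial>M)
      = (\<Sum>t=1..n. \<integral>x. exp (\<nu> (t-1)) * exp (f th x (y (t-1))) \<partial>M)"
    unfolding exp_add mult.commute[of "exp (f th _ _)"]
    by (rule Bochner_Integration.integral_sum[where f = "\<lambda>t x. exp (\<nu> (t-1)) * exp (f th x (y (t-1)))"])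
      (use integ in auto)
  also have "\<dots> = (\<Sum>t=1..n. exp (\<nu> (t-1)) * norm_const M f th (y (t-1)))"
    by (simp add: norm_const_def)
  finally show ?thesis unfolding Mobj_def by (simp add: sum_subtractf)
qed

context
  assumes pos: "\<And>t. t \<in> {1..n} \<Longrightarrow> 0 < norm_const M f th (y (t-1))"
begin

lemma Mobj_le_loglik: "Mobj M f y n th \<nu> \<le> loglik M f y n th - real n"
proof -
  have "Mobj M f y n th \<nu>
      \<le> (\<Sum>t=1..n. f th (y t) (y (t-1)) - ln (norm_const M f th (y (t-1))) - 1)"
    unfolding Mobj_eq_sum_norm_const
    by (intro sum_mono) (use sub_exp_mult_le[OF pos] in force)
  also have "\<dots> = loglik M f y n th - real n"
    by (simp add: loglik_eq_sum_norm_const sum_subtractf)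
  finally show ?thesis .
qed

lemma Mobj_neg_ln_norm_const:
  "Mobj M f y n th (\<lambda>s. - ln (norm_const M f th (y s))) = loglik M f y n th - real n"
proof -
  have "Mobj M f y n th (\<lambda>s. - ln (norm_const M f th (y s)))
      = (\<Sum>t=1..n. f th (y t) (y (t-1)) - ln (norm_const M f th (y (t-1))) - 1)"
    unfolding Mobj_eq_sum_norm_const
    by (intro sum.cong) (use sub_exp_mult_neg_ln[OF pos] in force)+
  also have "\<dots> = loglik M f y n th - real n"
    by (simp add: loglik_eq_sum_norm_const sum_subtractf)
  finally show ?thesis .
qed

end

end

theorem theorem2:
  fixes M :: "'a measure" and \<Theta> :: "'p set" and f :: "'p \<Rightarrow> 'a \<Rightarrow> 'a \<Rightarrow> real"
    and y :: "nat \<Rightarrow> 'a" and n :: nat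
  assumes integ: "\<And>th u. th \<in> \<Theta> \<Longrightarrow> u \<in> space M \<Longrightarrow> integrable M (\<lambda>x. exp (f th x u))"
    and pos: "\<And>th u. th \<in> \<Theta> \<Longrightarrow> u \<in> space M \<Longrightarrow> 0 < (\<integral>x. exp (f th x u) \<partial>M)"
    and obs: "\<And>t. t \<le> n \<Longrightarrow> y t \<in> space M"
  shows "{th \<in> \<Theta>. \<forall>th' \<in> \<Theta>. loglik M f y n th' \<le> loglik M f y n th}
       = {th \<in> \<Theta>. \<exists>\<nu>. \<forall>th' \<in> \<Theta>. \<forall>\<nu>'. Mobj M f y n th' \<nu>' \<le> Mobj M f y n th \<nu>}"
proof (rule argmax_eq_argmax_profile)
  fix th assume th: "th \<in> \<Theta>"
  have past: "y (t-1) \<in> space M" if "t \<in> {1..n}" for t using obs that by auto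
  note integ' = integ[OF th past] and pos' = pos[OF th past, folded norm_const_def]
  show "Mobj M f y n th \<nu> \<le> loglik M f y n th - real n" for \<nu>
    by (rule Mobj_le_loglik) (fact integ' pos')+
  show "\<exists>\<nu>. Mobj M f y n th \<nu> = loglik M f y n th - real n"
    by (rule exI, rule Mobj_neg_ln_norm_const) (fact integ' pos')+
qed

end
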